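(* Let $\mathcal{N}$ be a Beeping Network with $n$ nodes and maximum degree $\Delta$, where each node has a unique ID from $[1,n^c]$ for a constant $c\ge 1$, and each node $v$ knows $n$, the parameter $c$, the maximum degree $\Delta$, and its neighborhood $N(v)$ (the IDs of its neighbors), and holds a message $m_v$ of length at most $B>0$ bits. Then there is a deterministic distributed algorithm that solves Local Broadcast on $\mathcal{N}$ in $O(B\Delta^2\log n)$ beeping rounds.
   Context: A Beeping Network is a network of $n$ nodes whose topology is an undirected graph $G=(V,E)$; $N(v)$ denotes the set of neighbors of $v$. Time is divided into synchronous rounds and all nodes start simultaneously. In each round every node either beeps or listens; a listening node hears "silence" if no neighbor beeps and "noise" if at least one neighbor beeps, and cannot distinguish one beep from several. A beeping node receives no feedback in that round. Complexity is measured in rounds. Local Broadcast: every node $v$ holds a message $m_v$, and the problem is solved once, for every $v$, every node in $N(v)$ knows $m_v$. *)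

theory Defs
  imports Complex_Main
begin

text \<open>Nodes are identified with their (unique) IDs, which are natural numbers.
  A network is a finite vertex set V of IDs with a symmetric irreflexive
  edge relation E on V.\<close>

definition graph_on :: "nat set \<Rightarrow> (nat \<Rightarrow> nat \<Rightarrow> bool) \<Rightarrow> bool" where
  "graph_on V E \<longleftrightarrow> finite V \<and>
     (\<forall>u v. E u v \<longrightarrow> u \<in> V \<and> v \<in> V \<and> u \<noteq> v \<and> E v u)"

definition nbrs :: "nat set \<Rightarrow> (nat \<Rightarrow> nat \<Rightarrow> bool) \<Rightarrow> nat \<Rightarrow> nat set" where
  "nbrs V E v = {u \<in> V. E v u}"

definition is_max_degree :: "nat set \<Rightarrow> (nat \<Rightarrow> nat \<Rightarrow> bool) \<Rightarrow> nat \<Rightarrow> bool" where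
  "is_max_degree V E D \<longleftrightarrow>
     (\<forall>v\<in>V. card (nbrs V E v) \<le> D) \<and> (\<exists>v\<in>V. card (nbrs V E v) = D)"

text \<open>What a node observes in one round: it beeped (no feedback), or it
  listened and heard noise (True) or silence (False).\<close>
datatype obs = Beeped | Heard bool

record node_input =
  inp_n     :: nat
  inp_c     :: real
  inp_delta :: nat
  inp_id    :: nat
  inp_nbrs  :: "nat set"
  inp_msg   :: "bool list"

text \<open>A deterministic distributed algorithm: every node runs the same
  beep rule, which decides from its local input and its history of
  observations whether to beep in the next round; the output rule gives,
  from local input and history, the node's current belief about the message
  of the node with a given ID.  (Using the full history as state is without
  loss of generality for deterministic algorithms.)\<close>
type_synonym beep_rule = "node_input \<Rightarrow> obs list \<Rightarrow> bool"
type_synonym out_rule = "node_input \<Rightarrow> obs list \<Rightarrow> nat \<Rightarrow> bool list option"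

definition local_input ::
  "nat \<Rightarrow> real \<Rightarrow> nat \<Rightarrow> nat set \<Rightarrow> (nat \<Rightarrow> nat \<Rightarrow> bool) \<Rightarrow> (nat \<Rightarrow> bool list)
   \<Rightarrow> nat \<Rightarrow> node_input" where
  "local_input n c D V E m v =
     \<lparr> inp_n = n, inp_c = c, inp_delta = D, inp_id = v,
       inp_nbrs = nbrs V E v, inp_msg = m v \<rparr>"

primrec history ::
  "beep_rule \<Rightarrow> (nat \<Rightarrow> node_input) \<Rightarrow> nat set \<Rightarrow> (nat \<Rightarrow> nat \<Rightarrow> bool)
   \<Rightarrow> nat \<Rightarrow> nat \<Rightarrow> obs list" where
  "history A inp V E 0 v = []"
| "history A inp V E (Suc t) v =
     history A inp V E t v @
       [if A (inp v) (history A inp V E t v) then Beeped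
        else Heard (\<exists>u\<in>nbrs V E v. A (inp u) (history A inp V E t u))]"

definition local_broadcast_solved ::
  "beep_rule \<Rightarrow> out_rule \<Rightarrow> nat \<Rightarrow> real \<Rightarrow> nat \<Rightarrow> nat set \<Rightarrow> (nat \<Rightarrow> nat \<Rightarrow> bool)
   \<Rightarrow> (nat \<Rightarrow> bool list) \<Rightarrow> nat \<Rightarrow> bool" where
  "local_broadcast_solved A Out n c D V E m t \<longleftrightarrow>
     (\<forall>v\<in>V. \<forall>u\<in>nbrs V E v.
        Out (local_input n c D V E m u) (history A (local_input n c D V E m) V E t u) v
          = Some (m v))"

end

theory Submission
  imports Defs "HOL-Library.FuncSet" "HOL-Library.More_List"
begin

(*
  Give every ID x < 2^b, where b = O(c log n) bits suffice for IDs up to n^c, a codeword of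
  length r = (\<Delta>+1) b + 1 over an alphabet of 2\<Delta> letters such that for every x and every
  set Y of at most \<Delta> other IDs some coordinate i separates x from Y: no y in Y has the
  letter of x at i.  Such a code exists by a union bound: a random code fails for a fixed
  pair (x, Y) with probability at most (\<Delta>/2\<Delta>)^r = 2^-r, and there are at most
  2^(b(\<Delta>+1)) < 2^r such pairs.

  A frame consists of r * 2\<Delta> rounds, one slot per pair (i, a); node x beeps in slot (i, a)
  iff its codeword has letter a at coordinate i and the current bit of its signal is set.
  For a neighbour u of v, separating v from Y = {u} \<union> (N(u) - {v}) yields a slot in which v is
  the only node of {u} \<union> N(u) that may beep, so u hears the signal of v bit by bit.  The
  signal has 2B bits, so 2B frames, i.e. O(B \<Delta>^2 log n) rounds, suffice.
*)

lemma exists_notin_UN_if_sum_card_less: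
  assumes "finite I" and "\<And>p. p \<in> I \<Longrightarrow> A p \<subseteq> \<Omega>"
    and "(\<Sum>p\<in>I. card (A p)) < card \<Omega>"
  shows "\<exists>x\<in>\<Omega>. \<forall>p\<in>I. x \<notin> A p"
proof (rule ccontr)
  assume "\<not> ?thesis"
  then have "\<Omega> = (\<Union>p\<in>I. A p)" using assms(2) by blast
  then have "card \<Omega> \<le> (\<Sum>p\<in>I. card (A p))" using card_UN_le[OF assms(1)] by simp
  with assms(3) show False by simp
qed

definition separating_code :: "nat \<Rightarrow> nat \<Rightarrow> nat \<Rightarrow> nat \<Rightarrow> (nat \<Rightarrow> nat \<Rightarrow> nat) \<Rightarrow> bool" where
  "separating_code N k r q g \<longleftrightarrow>
     (\<forall>x<N. \<forall>i<r. g x i < q) \<and>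
     (\<forall>x<N. \<forall>Y\<subseteq>{..<N}. card Y \<le> k \<longrightarrow> x \<notin> Y \<longrightarrow> (\<exists>i<r. \<forall>y\<in>Y. g y i \<noteq> g x i))"

lemma card_covered_codes_le:
  fixes x N r q :: nat
  assumes "x < N" and "Y \<subseteq> {..<N} - {x}"
  shows "card {G \<in> {..<N} \<rightarrow>\<^sub>E {..<r} \<rightarrow>\<^sub>E {..<q}. \<forall>i<r. G x i \<in> (\<lambda>y. G y i) ` Y}
           \<le> (q ^ r) ^ (N - 1) * card Y ^ r"
proof -
  let ?W = "{..<r} \<rightarrow>\<^sub>E {..<q}"
  let ?others = "{..<N} - {x}"
  let ?C = "{G \<in> {..<N} \<rightarrow>\<^sub>E ?W. \<forall>i<r. G x i \<in> (\<lambda>y. G y i) ` Y}"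
  let ?T = "SIGMA F:?others \<rightarrow>\<^sub>E ?W. PiE {..<r} (\<lambda>i. (\<lambda>y. F y i) ` Y)"
  \<comment> \<open>A code is determined by the other codewords and the codeword of x, and given the
    former, each letter of the latter has at most card Y choices.\<close>
  define decompose where "decompose G = (restrict G ?others, G x)" for G :: "nat \<Rightarrow> nat \<Rightarrow> nat"
  have finY: "finite Y" using assms(2) finite_subset by blast
  have "inj_on decompose ?C"
  proof (rule inj_onI)
    fix G G' assume G: "G \<in> ?C" and G': "G' \<in> ?C" and eq: "decompose G = decompose G'"
    have others: "restrict G ?others = restrict G' ?others" and at_x: "G x = G' x"
      using eq by (simp_all add: decompose_def)
    show "G = G'"
    proof (rule PiE_ext[of G "{..<N}" "\<lambda>_. ?W" G'])
      fix y assume "y \<in> {..<N}"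
      then show "G y = G' y"
        using at_x fun_cong[OF others, of y] by (cases "y = x") auto
    qed (use G G' in auto)
  qed
  moreover have "decompose ` ?C \<subseteq> ?T"
  proof (rule image_subsetI)
    fix G assume G: "G \<in> ?C"
    have "(\<lambda>y. restrict G ?others y i) ` Y = (\<lambda>y. G y i) ` Y" for i
      using assms(2) by (intro image_cong) auto
    then show "decompose G \<in> ?T"
      using G assms(1) by (auto simp: decompose_def PiE_iff)
  qed
  moreover have "finite ?T" using finY by (auto intro!: finite_PiE)
  ultimately have "card ?C \<le> card ?T" by (rule card_inj_on_le)
  also have "card ?T = (\<Sum>F\<in>?others \<rightarrow>\<^sub>E ?W. \<Prod>i<r. card ((\<lambda>y. F y i) ` Y))"
    using finY by (simp add: card_PiE finite_PiE)
  also have "\<dots> \<le> (\<Sum>F\<in>?others \<rightarrow>\<^sub>E ?W. \<Prod>i<r. card Y)"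
    by (intro sum_mono prod_mono) (simp add: card_image_le finY)
  also have "\<dots> = (q ^ r) ^ (N - 1) * card Y ^ r"
    using assms(1) by (simp add: card_PiE)
  finally show ?thesis .
qed

lemma separating_codeI:
  assumes "\<And>x i. x < N \<Longrightarrow> i < r \<Longrightarrow> g x i < q"
    and "\<And>x ys. x < N \<Longrightarrow> set ys \<subseteq> {..<N} \<Longrightarrow> length ys = k \<Longrightarrow>
           \<exists>i<r. g x i \<notin> (\<lambda>y. g y i) ` (set ys - {x})"
  shows "separating_code N k r q g"
  unfolding separating_code_def
proof (intro conjI allI impI)
  fix x Y assume x: "x < N" and Y: "Y \<subseteq> {..<N}" "card Y \<le> k" "x \<notin> Y"
  \<comment> \<open>Padding with x, which is removed again, turns Y into a list of length exactly k.\<close>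
  define ys where "ys = sorted_list_of_set Y @ replicate (k - card Y) x"
  have "finite Y" using Y(1) finite_subset by blast
  then have "set ys \<subseteq> {..<N}" "length ys = k" and others: "set ys - {x} = Y"
    using x Y by (auto simp: ys_def)
  then obtain i where "i < r" "g x i \<notin> (\<lambda>y. g y i) ` Y"
    using assms(2)[OF x] by (metis others)
  then show "\<exists>i<r. \<forall>y\<in>Y. g y i \<noteq> g x i" by (metis image_eqI)
qed (use assms(1) in blast)

lemma card_codes_covered_by_list_le:
  fixes x N r q :: nat
  assumes "x < N" and "set ys \<subseteq> {..<N}" and "length ys = k"
  shows "card {G \<in> {..<N} \<rightarrow>\<^sub>E {..<r} \<rightarrow>\<^sub>E {..<q}. \<forall>i<r. G x i \<in> (\<lambda>y. G y i) ` (set ys - {x})}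
           \<le> (q ^ r) ^ (N - 1) * k ^ r"
proof -
  have "card (set ys - {x}) \<le> k"
    using card_length[of ys] card_Diff1_le[of "set ys" x] assms(3) by simp
  then have "card (set ys - {x}) ^ r \<le> k ^ r" by (rule power_mono) simp
  moreover have "card {G \<in> {..<N} \<rightarrow>\<^sub>E {..<r} \<rightarrow>\<^sub>E {..<q}. \<forall>i<r. G x i \<in> (\<lambda>y. G y i) ` (set ys - {x})}
      \<le> (q ^ r) ^ (N - 1) * card (set ys - {x}) ^ r"
    using assms by (intro card_covered_codes_le) auto
  ultimately show ?thesis by (meson le_trans mult_le_mono2)
qed

lemma separating_code_exists:
  assumes "N ^ (k + 1) * k ^ r < q ^ r"
  shows "\<exists>g. separating_code N k r q g"
proof (cases "N = 0")
  case True
  then show ?thesis by (simp add: separating_code_def)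
next
  case False
  let ?\<Omega> = "{..<N} \<rightarrow>\<^sub>E {..<r} \<rightarrow>\<^sub>E {..<q}"
  let ?I = "{..<N} \<times> {ys. set ys \<subseteq> {..<N} \<and> length ys = k}"
  define covered where
    "covered = (\<lambda>(x, ys). {G \<in> ?\<Omega>. \<forall>i<r. G x i \<in> (\<lambda>y. G y i) ` (set ys - {x})})"
  have "0 < q ^ r" by (rule le_less_trans[OF le0 assms])
  have "card (covered p) \<le> (q ^ r) ^ (N - 1) * k ^ r" if "p \<in> ?I" for p
  proof -
    obtain x ys where p: "p = (x, ys)" and ys: "x < N" "set ys \<subseteq> {..<N}" "length ys = k"
      using \<open>p \<in> ?I\<close> by (cases p) auto
    from ys show ?thesis
      unfolding p covered_def prod.case by (rule card_codes_covered_by_list_le)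
  qed
  then have "(\<Sum>p\<in>?I. card (covered p)) \<le> card ?I * ((q ^ r) ^ (N - 1) * k ^ r)"
    using sum_bounded_above[of ?I "\<lambda>p. card (covered p)"] by simp
  also have "\<dots> = (N ^ (k + 1) * k ^ r) * (q ^ r) ^ (N - 1)"
    by (simp add: card_cartesian_product card_lists_length_eq)
  also have "\<dots> < q ^ r * (q ^ r) ^ (N - 1)"
    using assms \<open>0 < q ^ r\<close> by simp
  also have "\<dots> = card ?\<Omega>"
    using False by (simp add: card_PiE power_eq_if)
  finally have "(\<Sum>p\<in>?I. card (covered p)) < card ?\<Omega>" .
  moreover have "finite ?I" by (simp add: finite_lists_length_eq)
  moreover have "covered p \<subseteq> ?\<Omega>" for p by (auto simp: covered_def split: prod.split)
  ultimately obtain G where G: "G \<in> ?\<Omega>" and not_covered: "\<And>p. p \<in> ?I \<Longrightarrow> G \<notin> covered p"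
    using exists_notin_UN_if_sum_card_less[of ?I covered ?\<Omega>] by blast
  have "separating_code N k r q G"
  proof (rule separating_codeI)
    show "G x i < q" if "x < N" "i < r" for x i
      using G that by auto
    show "\<exists>i<r. G x i \<notin> (\<lambda>y. G y i) ` (set ys - {x})"
      if "x < N" "set ys \<subseteq> {..<N}" "length ys = k" for x ys
      using not_covered[of "(x, ys)"] G that by (auto simp: covered_def)
  qed
  then show ?thesis by blast
qed

lemma length_history [simp]: "length (history A inp V E t v) = t"
  by (induction t) simp_all

lemma history_oblivious:
  "history (\<lambda>inp h. S inp (length h)) inp V E t v =
     map (\<lambda>R. if S (inp v) R then Beeped else Heard (\<exists>u\<in>nbrs V E v. S (inp u) R)) [0..<t]"
  by (induction t arbitrary: v) simp_all

lemma history_nth_single_beeper: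
  assumes "R < t" and "v \<in> nbrs V E u" and "\<not> S (inp u) R"
    and "\<And>x. x \<in> nbrs V E u \<Longrightarrow> x \<noteq> v \<Longrightarrow> \<not> S (inp x) R"
  shows "history (\<lambda>inp h. S inp (length h)) inp V E t u ! R = Heard (S (inp v) R)"
  using assms by (auto simp: history_oblivious)

lemma card_insert_nbrs_Diff_le:
  assumes "graph_on V E" and "v \<in> nbrs V E u" and "card (nbrs V E u) \<le> D"
  shows "card (insert u (nbrs V E u - {v})) \<le> D"
proof -
  have fin: "finite (nbrs V E u)"
    using assms(1) by (simp add: graph_on_def nbrs_def)
  have "card (insert u (nbrs V E u - {v})) \<le> Suc (card (nbrs V E u - {v}))"
    using fin by (simp add: card_insert_if)
  also have "\<dots> = card (nbrs V E u)"
    using assms(2) fin card_gt_0_iff[of "nbrs V E u"] by (auto simp: card_Diff_singleton)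
  finally show ?thesis using assms(3) by simp
qed

lemma two_le_card_if_max_degree_pos:
  assumes "graph_on V E" and "is_max_degree V E D" and "1 \<le> D"
  shows "2 \<le> card V"
proof -
  obtain v where v: "v \<in> V" "card (nbrs V E v) = D"
    using assms(2) by (auto simp: is_max_degree_def)
  then obtain u where "u \<in> nbrs V E v"
    using assms(3) by fastforce
  then have uv: "{u, v} \<subseteq> V" and "u \<noteq> v"
    using assms(1) v(1) by (auto simp: graph_on_def nbrs_def)
  have "finite V" using assms(1) by (simp add: graph_on_def)
  then have "card {u, v} \<le> card V" using uv by (rule card_mono)
  then show ?thesis using \<open>u \<noteq> v\<close> by simp
qed

lemma local_broadcast_solved_max_degree_0:
  assumes "graph_on V E" and "is_max_degree V E 0"
  shows "local_broadcast_solved A Out n c 0 V E m t"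
proof -
  have "nbrs V E v = {}" if "v \<in> V" for v
  proof -
    have "finite (nbrs V E v)" using assms(1) by (simp add: graph_on_def nbrs_def)
    moreover have "card (nbrs V E v) = 0" using assms(2) that by (simp add: is_max_degree_def)
    ultimately show ?thesis by simp
  qed
  then show ?thesis by (simp add: local_broadcast_solved_def)
qed

definition id_bits :: "nat \<Rightarrow> real \<Rightarrow> nat" where
  "id_bits n c = nat \<lceil>c * log 2 (real n)\<rceil> + 1"

lemma less_power_id_bits:
  assumes "1 \<le> n" and "real v \<le> real n powr c"
  shows "v < 2 ^ id_bits n c"
proof -
  have "real n powr c = (2 powr log 2 (real n)) powr c"
    using assms(1) by simp
  also have "\<dots> = 2 powr (c * log 2 (real n))"
    by (simp add: powr_powr mult.commute)
  also have "\<dots> < 2 powr real (id_bits n c)"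
    unfolding id_bits_def by (intro powr_less_mono) linarith+
  also have "\<dots> = real (2 ^ id_bits n c)"
    by (simp add: powr_realpow)
  finally show ?thesis using assms(2) by linarith
qed

lemma id_bits_le:
  assumes "2 \<le> n" and "0 \<le> c"
  shows "real (id_bits n c) \<le> (c + 2) * log 2 (real n)"
proof -
  have log_ge_1: "1 \<le> log 2 (real n)" using assms(1) by simp
  then have "0 \<le> c * log 2 (real n)" using assms(2) by simp
  then have "real (id_bits n c) \<le> c * log 2 (real n) + 2"
    unfolding id_bits_def by linarith
  also have "\<dots> \<le> (c + 2) * log 2 (real n)"
    using log_ge_1 by (simp add: algebra_simps)
  finally show ?thesis .
qed

(* Every message bit b is sent as [True, b]: the receiver learns the length of the message
   from the first False in an even position. *)
definition signal :: "bool list \<Rightarrow> bool list" where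
  "signal msg = concat (map (\<lambda>b. [True, b]) msg)"

fun decode_signal :: "bool list \<Rightarrow> bool list" where
  "decode_signal (True # b # w) = b # decode_signal w"
| "decode_signal _ = []"

lemma length_signal [simp]: "length (signal msg) = 2 * length msg"
  by (induction msg) (simp_all add: signal_def)

lemma decode_signal_padded: "decode_signal (signal msg @ replicate k False) = msg"
  by (induction msg) (cases k, simp_all add: signal_def)

lemma map_nth_default_upt:
  assumes "length xs \<le> n"
  shows "map (nth_default d xs) [0..<n] = xs @ replicate (n - length xs) d"
  using assms by (intro nth_equalityI) (auto simp: nth_default_def nth_append)

definition code_length :: "nat \<Rightarrow> real \<Rightarrow> nat \<Rightarrow> nat" where
  "code_length n c D = (D + 1) * id_bits n c + 1"

definition frame_length :: "nat \<Rightarrow> real \<Rightarrow> nat \<Rightarrow> nat" where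
  "frame_length n c D = code_length n c D * (2 * D)"

definition beep_code :: "nat \<Rightarrow> real \<Rightarrow> nat \<Rightarrow> nat \<Rightarrow> nat \<Rightarrow> nat" where
  "beep_code n c D =
     (SOME g. separating_code (2 ^ id_bits n c) D (code_length n c D) (2 * D) g)"

lemma separating_code_beep_code:
  assumes "1 \<le> D"
  shows "separating_code (2 ^ id_bits n c) D (code_length n c D) (2 * D) (beep_code n c D)"
proof -
  let ?r = "code_length n c D"
  have "(2 ^ id_bits n c) ^ (D + 1) = (2::nat) ^ ((D + 1) * id_bits n c)"
    by (metis power_mult mult.commute)
  also have "\<dots> < 2 ^ ?r"
    unfolding code_length_def by (rule power_strict_increasing) simp_all
  finally have "(2 ^ id_bits n c) ^ (D + 1) < (2::nat) ^ ?r" .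
  then have "(2 ^ id_bits n c) ^ (D + 1) * D ^ ?r < 2 ^ ?r * D ^ ?r"
    using assms by simp
  then have "(2 ^ id_bits n c) ^ (D + 1) * D ^ ?r < (2 * D) ^ ?r"
    by (simp add: power_mult_distrib)
  then show ?thesis
    unfolding beep_code_def by (rule someI_ex[OF separating_code_exists])
qed

(* Round R is slot j = i * 2D + a of frame R div L; the frame selects the signal bit, the slot
   the coordinate i and letter a. *)
definition beeps_at :: "nat \<Rightarrow> real \<Rightarrow> nat \<Rightarrow> nat \<Rightarrow> bool list \<Rightarrow> nat \<Rightarrow> bool" where
  "beeps_at n c D x msg R \<longleftrightarrow>
     (let L = frame_length n c D; j = R mod L
      in beep_code n c D x (j div (2 * D)) = j mod (2 * D)
         \<and> nth_default False (signal msg) (R div L))"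

lemma slot_less_frame_length:
  assumes "i < code_length n c D" and "a < 2 * D"
  shows "i * (2 * D) + a < frame_length n c D"
proof -
  have "i * (2 * D) + a < (i + 1) * (2 * D)" using assms(2) by simp
  also have "\<dots> \<le> frame_length n c D"
    unfolding frame_length_def using assms(1) by (intro mult_right_mono) auto
  finally show ?thesis .
qed

lemma beeps_at_slot:
  assumes "i < code_length n c D" and "a < 2 * D"
  shows "beeps_at n c D x msg (f * frame_length n c D + (i * (2 * D) + a)) \<longleftrightarrow>
           beep_code n c D x i = a \<and> nth_default False (signal msg) f"
  using slot_less_frame_length[OF assms] assms(2) by (simp add: beeps_at_def Let_def)

definition listening_slot :: "nat \<Rightarrow> real \<Rightarrow> nat \<Rightarrow> nat set \<Rightarrow> nat \<Rightarrow> nat" where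
  "listening_slot n c D Y w =
     (let g = beep_code n c D;
          i = (LEAST i. i < code_length n c D \<and> (\<forall>y\<in>Y. g y i \<noteq> g w i))
      in i * (2 * D) + g w i)"

lemma listening_slot_isolates:
  assumes "1 \<le> D" and "w < 2 ^ id_bits n c" and "Y \<subseteq> {..<2 ^ id_bits n c}"
    and "card Y \<le> D" and "w \<notin> Y"
  obtains i where "i < code_length n c D" and "beep_code n c D w i < 2 * D"
    and "listening_slot n c D Y w = i * (2 * D) + beep_code n c D w i"
    and "\<And>y. y \<in> Y \<Longrightarrow> beep_code n c D y i \<noteq> beep_code n c D w i"
proof -
  let ?g = "beep_code n c D"
  let ?P = "\<lambda>i. i < code_length n c D \<and> (\<forall>y\<in>Y. ?g y i \<noteq> ?g w i)"
  have code: "separating_code (2 ^ id_bits n c) D (code_length n c D) (2 * D) ?g"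
    using assms(1) by (rule separating_code_beep_code)
  then have "\<exists>i. ?P i"
    using assms(2-5) unfolding separating_code_def by blast
  then have least: "?P (LEAST i. ?P i)" by (rule LeastI_ex)
  moreover have "?g w (LEAST i. ?P i) < 2 * D"
    using code assms(2) least unfolding separating_code_def by blast
  moreover have "listening_slot n c D Y w = (LEAST i. ?P i) * (2 * D) + ?g w (LEAST i. ?P i)"
    by (simp add: listening_slot_def Let_def)
  ultimately show ?thesis using that by blast
qed

definition beep_local :: beep_rule where
  "beep_local =
     (\<lambda>inp h. beeps_at (inp_n inp) (inp_c inp) (inp_delta inp) (inp_id inp) (inp_msg inp) (length h))"

(* The listener itself belongs to the set separated from w, since a beeping node hears nothing. *)
definition output_local :: out_rule where
  "output_local inp h w =
     (let n = inp_n inp; c = inp_c inp; D = inp_delta inp; L = frame_length n c D;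
          j = listening_slot n c D (insert (inp_id inp) (inp_nbrs inp - {w})) w
      in Some (decode_signal (map (\<lambda>f. h ! (f * L + j) = Heard True) [0..<length h div L])))"

lemma history_beep_local_listening_slot:
  assumes "graph_on V E" and "1 \<le> D" and "\<forall>v\<in>V. card (nbrs V E v) \<le> D"
    and "\<forall>v\<in>V. v < 2 ^ id_bits n c" and "v \<in> V" and "u \<in> nbrs V E v" and "f < T"
  shows "history beep_local (local_input n c D V E m) V E (T * frame_length n c D) u
           ! (f * frame_length n c D + listening_slot n c D (insert u (nbrs V E u - {v})) v)
         = Heard (nth_default False (signal (m v)) f)"
proof -
  let ?L = "frame_length n c D"
  let ?Y = "insert u (nbrs V E u - {v})"
  let ?j = "listening_slot n c D ?Y v"
  have uV: "u \<in> V" and "u \<noteq> v" and vu: "v \<in> nbrs V E u"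
    using assms(1,5,6) by (auto simp: graph_on_def nbrs_def)
  have "card ?Y \<le> D"
    using assms(1,3) uV vu by (intro card_insert_nbrs_Diff_le) auto
  moreover have "?Y \<subseteq> {..<2 ^ id_bits n c}"
    using uV assms(4) by (auto simp: nbrs_def)
  moreover have "v \<notin> ?Y" using \<open>u \<noteq> v\<close> by simp
  moreover have "v < 2 ^ id_bits n c" using assms(4,5) by blast
  ultimately obtain i where i: "i < code_length n c D" "beep_code n c D v i < 2 * D"
    and slot: "?j = i * (2 * D) + beep_code n c D v i"
    and isolated: "\<And>y. y \<in> ?Y \<Longrightarrow> beep_code n c D y i \<noteq> beep_code n c D v i"
    using listening_slot_isolates[OF assms(2)] by metis
  have beeps: "beeps_at n c D x (m x) (f * ?L + ?j) \<longleftrightarrow>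
      beep_code n c D x i = beep_code n c D v i \<and> nth_default False (signal (m x)) f" for x
    unfolding slot using beeps_at_slot[OF i] .
  have "?j < ?L" unfolding slot using i by (rule slot_less_frame_length)
  then have "f * ?L + ?j < (f + 1) * ?L" by simp
  also have "\<dots> \<le> T * ?L" using assms(7) by (intro mult_right_mono) simp_all
  finally have "f * ?L + ?j < T * ?L" .
  then show ?thesis
    unfolding beep_local_def using beeps isolated vu
    by (subst history_nth_single_beeper) (auto simp: local_input_def)
qed

lemma local_broadcast_solved_beep_local:
  assumes "graph_on V E" and "1 \<le> D" and "\<forall>v\<in>V. card (nbrs V E v) \<le> D"
    and "\<forall>v\<in>V. v < 2 ^ id_bits n c" and "\<forall>v\<in>V. length (m v) \<le> B"
  shows "local_broadcast_solved beep_local output_local n c D V E m (2 * B * frame_length n c D)"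
  unfolding local_broadcast_solved_def
proof (intro ballI)
  fix v u assume v: "v \<in> V" and u: "u \<in> nbrs V E v"
  let ?inp = "local_input n c D V E m"
  let ?L = "frame_length n c D"
  let ?h = "history beep_local ?inp V E (2 * B * ?L) u"
  let ?j = "listening_slot n c D (insert u (nbrs V E u - {v})) v"
  have "0 < ?L" using assms(2) by (simp add: frame_length_def code_length_def)
  then have "output_local (?inp u) ?h v =
      Some (decode_signal (map (\<lambda>f. ?h ! (f * ?L + ?j) = Heard True) [0..<2 * B]))"
    by (simp add: output_local_def local_input_def Let_def)
  also have "map (\<lambda>f. ?h ! (f * ?L + ?j) = Heard True) [0..<2 * B] =
      map (nth_default False (signal (m v))) [0..<2 * B]"
    using history_beep_local_listening_slot[OF assms(1-4) v u] by simp
  also have "\<dots> = signal (m v) @ replicate (2 * B - 2 * length (m v)) False"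
    using assms(5) v by (simp add: map_nth_default_upt)
  finally show "output_local (?inp u) ?h v = Some (m v)"
    by (simp add: decode_signal_padded)
qed

lemma broadcast_rounds_le:
  assumes "2 \<le> n" and "0 \<le> c" and "1 \<le> D"
  shows "real (2 * B * frame_length n c D) \<le> 4 * (2 * c + 5) * real B * real D ^ 2 * log 2 (real n)"
proof -
  let ?log = "log 2 (real n)"
  have log_ge_1: "1 \<le> ?log" using assms(1) by simp
  have "real (code_length n c D) = (real D + 1) * real (id_bits n c) + 1"
    by (simp add: code_length_def algebra_simps)
  also have "\<dots> \<le> (real D + 1) * ((c + 2) * ?log) + ?log"
    using id_bits_le[OF assms(1,2)] log_ge_1 by (intro add_mono mult_left_mono) simp_all
  also have "\<dots> \<le> 2 * real D * ((c + 2) * ?log) + real D * ?log"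
    using assms log_ge_1 by (intro add_mono mult_right_mono) simp_all
  also have "\<dots> = (2 * c + 5) * real D * ?log"
    by (simp add: algebra_simps)
  finally have "real (code_length n c D) \<le> (2 * c + 5) * real D * ?log" .
  then have "real (code_length n c D) * (4 * real B * real D)
      \<le> (2 * c + 5) * real D * ?log * (4 * real B * real D)"
    by (intro mult_right_mono) simp_all
  then show ?thesis
    by (simp add: frame_length_def power2_eq_square algebra_simps)
qed

theorem theorem1:
  fixes c :: real
  assumes "c \<ge> 1"
  shows "\<exists>(A :: beep_rule) (Out :: out_rule) (K :: real). K > 0 \<and>
    (\<forall>(n :: nat) (D :: nat) (B :: nat) (V :: nat set) (E :: nat \<Rightarrow> nat \<Rightarrow> bool)
        (m :: nat \<Rightarrow> bool list).
       graph_on V E \<and> card V = n \<and>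
       (\<forall>v\<in>V. 1 \<le> v \<and> real v \<le> real n powr c) \<and>
       is_max_degree V E D \<and> B > 0 \<and> (\<forall>v\<in>V. length (m v) \<le> B)
       \<longrightarrow> (\<exists>t::nat. real t \<le> K * real B * real D ^ 2 * log 2 (real n) \<and>
                  local_broadcast_solved A Out n c D V E m t))"
proof (rule exI[of _ beep_local], rule exI[of _ output_local], rule exI[of _ "4 * (2 * c + 5)"],
    intro conjI allI impI)
  let ?K = "4 * (2 * c + 5)"
  show "?K > 0" using assms by simp
  fix n D B V E and m :: "nat \<Rightarrow> bool list"
  assume "graph_on V E \<and> card V = n \<and> (\<forall>v\<in>V. 1 \<le> v \<and> real v \<le> real n powr c) \<and>
    is_max_degree V E D \<and> B > 0 \<and> (\<forall>v\<in>V. length (m v) \<le> B)"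
  then have G: "graph_on V E" and n: "card V = n" and ids: "\<forall>v\<in>V. real v \<le> real n powr c"
    and D: "is_max_degree V E D" and m: "\<forall>v\<in>V. length (m v) \<le> B"
    by auto
  show "\<exists>t. real t \<le> ?K * real B * real D ^ 2 * log 2 (real n) \<and>
      local_broadcast_solved beep_local output_local n c D V E m t"
  proof (cases "D = 0")
    case True
    then show ?thesis
      using G D local_broadcast_solved_max_degree_0 by (intro exI[of _ 0]) simp
  next
    case False
    then have "2 \<le> n" using two_le_card_if_max_degree_pos[OF G D] n by simp
    then have "\<forall>v\<in>V. v < 2 ^ id_bits n c" using ids by (simp add: less_power_id_bits)
    then have "local_broadcast_solved beep_local output_local n c D V E m (2 * B * frame_length n c D)"
      using G D m False by (intro local_broadcast_solved_beep_local) (auto simp: is_max_degree_def)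
    moreover have "real (2 * B * frame_length n c D) \<le> ?K * real B * real D ^ 2 * log 2 (real n)"
      using \<open>2 \<le> n\<close> assms False by (intro broadcast_rounds_le) simp_all
    ultimately show ?thesis by blast
  qed
qed

end
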